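(* Let $k\ge2$, and let $c>\frac12$ and $\delta>0$ be fixed. Then for every $k$-admissible $m\times k$ matrix $D$ (with denominator $q$) and every $n\ge1$, $$I(D,n,c,\delta)\le M(D)^{-n}\frac{\delta^{m-2kc}}{(2c-1)^m},$$ where $M(D)$ is $q^{-m}$ times the largest value taken by the determinant of any $m\times m$ minor of $D$.
   Context: A division $(\nu,\mu)$ of $\{1,\dots,k\}$ consists of $1\le m\le k-1$ and strictly increasing sequences $\nu_1<\dots<\nu_m$, $\mu_1<\dots<\mu_{k-m}$ in $\{1,\dots,k\}$ which are disjoint. Given a positive integer $q$, an $m\times k$ integer matrix $D=(d_{ij})$ is $(\nu,\mu)$-admissible (with denominator $q$) if no column vanishes, the gcd of its entries is $1$, $d_{i\nu_j}=q\delta_{ij}$ for $1\le i,j\le m$, and $d_{i\mu_j}=0$ whenever $\mu_j<\nu_i$; $D$ is $k$-admissible if it is $(\nu,\mu)$-admissible for some division and some $q$. $V_n=\pi^{n/2}/\Gamma(\frac n2+1)$, $R_n(\delta)=(\delta/V_n)^{1/n}$, $f_{c,\delta}(\mathbf x)=|\mathbf x|^{-2cn}$ if $|\mathbf x|>R_n(\delta)$ and $0$ otherwise, and $$I(D,n,c,\delta)=V_n^{-2kc}\int_{\mathbb R^n}\cdots\int_{\mathbb R^n}\prod_{j=1}^k f_{c,\delta}\Big(\sum_{i=1}^m\frac{d_{ij}}{q}\mathbf x_i\Big)\,d\mathbf x_1\cdots d\mathbf x_m.$$ *)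

theory Defs
  imports "HOL-Analysis.Analysis"
begin

text \<open>Indices are 0-based: rows 0..m-1, columns 0..k-1.
  Matrices are functions nat => nat => int (entries outside the range are irrelevant).\<close>

definition is_division :: "nat \<Rightarrow> nat \<Rightarrow> (nat \<Rightarrow> nat) \<Rightarrow> (nat \<Rightarrow> nat) \<Rightarrow> bool" where
  "is_division k m \<nu> \<mu> \<longleftrightarrow>
     1 \<le> m \<and> m \<le> k - 1 \<and>
     strict_mono_on {..<m} \<nu> \<and> strict_mono_on {..<k - m} \<mu> \<and>
     \<nu> ` {..<m} \<subseteq> {..<k} \<and> \<mu> ` {..<k - m} \<subseteq> {..<k} \<and>
     \<nu> ` {..<m} \<inter> \<mu> ` {..<k - m} = {}"

definition admissible ::
  "nat \<Rightarrow> nat \<Rightarrow> (nat \<Rightarrow> nat) \<Rightarrow> (nat \<Rightarrow> nat) \<Rightarrow> int \<Rightarrow> (nat \<Rightarrow> nat \<Rightarrow> int) \<Rightarrow> bool" where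
  "admissible k m \<nu> \<mu> q D \<longleftrightarrow>
     is_division k m \<nu> \<mu> \<and> q > 0 \<and>
     (\<forall>j<k. \<exists>i<m. D i j \<noteq> 0) \<and>
     Gcd {D i j | i j. i < m \<and> j < k} = 1 \<and>
     (\<forall>i<m. \<forall>j<m. D i (\<nu> j) = (if i = j then q else 0)) \<and>
     (\<forall>i<m. \<forall>j<k - m. \<mu> j < \<nu> i \<longrightarrow> D i (\<mu> j) = 0)"

definition mdet :: "nat \<Rightarrow> (nat \<Rightarrow> nat \<Rightarrow> int) \<Rightarrow> int" where
  "mdet m A = (\<Sum>p | p permutes {..<m}. sign p * (\<Prod>i<m. A i (p i)))"

definition MD :: "nat \<Rightarrow> nat \<Rightarrow> int \<Rightarrow> (nat \<Rightarrow> nat \<Rightarrow> int) \<Rightarrow> real" where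
  "MD k m q D = real_of_int q powi (- int m) *
     real_of_int (Max {\<bar>mdet m (\<lambda>i j. D i (s j))\<bar> | s.
         strict_mono_on {..<m} s \<and> s ` {..<m} \<subseteq> {..<k}})"

definition Vn :: "nat \<Rightarrow> real" where
  "Vn n = pi powr (real n / 2) / Gamma (real n / 2 + 1)"

definition Rn :: "nat \<Rightarrow> real \<Rightarrow> real" where
  "Rn n \<delta> = (\<delta> / Vn n) powr (1 / real n)"

definition fcd :: "real \<Rightarrow> real \<Rightarrow> real ^ 'n \<Rightarrow> real" where
  "fcd c \<delta> x = (if norm x > Rn CARD('n) \<delta> then norm x powr (- 2 * c * real CARD('n)) else 0)"

text \<open>I(D,n,c,delta) with n = CARD('n); the integral over (R^n)^m is a nonnegative
  Lebesgue integral, so the value lives in ennreal.\<close>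
definition Iint :: "nat \<Rightarrow> nat \<Rightarrow> int \<Rightarrow> (nat \<Rightarrow> nat \<Rightarrow> int) \<Rightarrow> real \<Rightarrow> real \<Rightarrow> ('n::finite) itself \<Rightarrow> ennreal" where
  "Iint k m q D c \<delta> _ =
     ennreal (Vn CARD('n) powr (- 2 * real k * c)) *
     (\<integral>\<^sup>+ x. ennreal (\<Prod>j<k. fcd c \<delta> (\<Sum>i<m. (real_of_int (D i j) / real_of_int q) *\<^sub>R (x i :: real ^ 'n)))
        \<partial>(PiM {..<m} (\<lambda>_. lborel)))"

end

theory Submission
  imports Defs "Jordan_Normal_Form.Determinant"
begin

text \<open>Choose \<open>m\<close> columns \<open>s\<close> of \<open>D\<close> realising the largest minor; the pivot columns \<open>\<nu>\<close> have
  minor \<open>q\<^sup>m\<close>, so \<open>M(D) > 0\<close>. Each of the \<open>k - m\<close> other factors of the integrand is at most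
  \<open>sup f = V\<^sub>n\<^sup>2\<^sup>c \<delta>\<^sup>-\<^sup>2\<^sup>c\<close>, since \<open>f\<close> vanishes on the ball of volume \<open>\<delta>\<close>. The remaining \<open>m\<close> factors
  are \<open>f\<close> at \<open>m\<close> independent linear forms in \<open>x\<^sub>1, \<dots>, x\<^sub>m\<close>; the linear change of variables has
  Jacobian \<open>M(D)\<^sup>n\<close>, so they integrate to \<open>M(D)\<^sup>-\<^sup>n (\<integral>f)\<^sup>m\<close>, and \<open>\<integral>f = V\<^sub>n\<^sup>2\<^sup>c \<delta>\<^sup>1\<^sup>-\<^sup>2\<^sup>c / (2c - 1)\<close> by
  integrating in spherical shells. All powers of \<open>V\<^sub>n\<close> cancel.\<close>

lemma det_identity_with_row:
  fixes \<beta> :: "nat \<Rightarrow> 'a::comm_ring_1"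
  assumes j0: "j0 < n"
  shows "det (mat n n (\<lambda>(i,j). if i = j then 1 else if i = j0 then \<beta> j else 0)) = 1"
proof -
  let ?E = "mat n n (\<lambda>(i,j). if i = j then 1 else if i = j0 then \<beta> j else (0::'a))"
  have E: "?E \<in> carrier_mat n n" by simp
  have "det ?E = (\<Sum>i<n. ?E $$ (i,j0) * cofactor ?E i j0)"
    by (rule laplace_expansion_column[OF E j0])
  also have "\<dots> = (\<Sum>i<n. if i = j0 then cofactor ?E j0 j0 else 0)"
    using j0 by (intro sum.cong) auto
  also have "\<dots> = cofactor ?E j0 j0" using j0 by simp
  moreover have "mat_delete ?E j0 j0 = 1\<^sub>m (n - 1)"
    by (rule eq_matI) (auto simp: mat_delete_def)
  ultimately show ?thesis by (simp add: cofactor_def)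
qed

text \<open>Eliminate the last row against the pivot \<open>a m j0\<close> by column operations, then expand
  along that row.\<close>
lemma det_pivot_last_row:
  fixes a :: "nat \<Rightarrow> nat \<Rightarrow> 'a::field"
  assumes j0: "j0 < Suc m" and pivot: "a m j0 \<noteq> 0"
  shows "det (mat (Suc m) (Suc m) (\<lambda>(i,j). a i j)) = a m j0 * (-1)^(m+j0) *
     det (mat m m (\<lambda>(i,j). a i (insert_index j0 j) - a m (insert_index j0 j) / a m j0 * a i j0))"
proof -
  define \<alpha> where "\<alpha> = a m j0"
  define A where "A = mat (Suc m) (Suc m) (\<lambda>(i,j). a i j)"
  define E where "E = mat (Suc m) (Suc m) (\<lambda>(i,j). if i = j then 1 else if i = j0 then - a m j / \<alpha> else 0)"
  define C where "C = mat (Suc m) (Suc m) (\<lambda>(i,j). if j = j0 then a i j else a i j - a m j / \<alpha> * a i j0)"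
  have A: "A \<in> carrier_mat (Suc m) (Suc m)" and E: "E \<in> carrier_mat (Suc m) (Suc m)"
    and C: "C \<in> carrier_mat (Suc m) (Suc m)"
    by (auto simp: A_def E_def C_def)
  have AE: "A * E = C"
  proof (rule eq_matI)
    fix i j assume "i < dim_row C" and "j < dim_col C"
    then have i: "i < Suc m" and j: "j < Suc m" by (auto simp: C_def)
    have "(A * E) $$ (i,j) = (\<Sum>l\<in>{0..<Suc m}. a i l * E $$ (l, j))"
      using i j by (simp add: A_def E_def scalar_prod_def)
    also have "\<dots> = (\<Sum>l\<in>{0..<Suc m}. (if l = j then a i l else 0) +
        (if l = j0 \<and> j \<noteq> j0 then a i l * (- a m j / \<alpha>) else 0))"
      using j by (intro sum.cong) (auto simp: E_def)
    also have "\<dots> = C $$ (i,j)"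
      using i j j0 by (simp add: sum.distrib C_def)
    finally show "(A * E) $$ (i,j) = C $$ (i,j)" .
  qed (auto simp: A_def E_def C_def)
  have "det E = 1" unfolding E_def by (rule det_identity_with_row[OF j0])
  then have "det A = det C" using det_mult[OF A E] by (simp add: AE)
  also have "\<dots> = (\<Sum>j<Suc m. C $$ (m,j) * cofactor C m j)"
    by (rule laplace_expansion_row[OF C]) simp
  also have "\<dots> = (\<Sum>j<Suc m. if j = j0 then \<alpha> * cofactor C m j0 else 0)"
    by (intro sum.cong) (auto simp: C_def \<alpha>_def pivot)
  also have "\<dots> = \<alpha> * cofactor C m j0" using j0 by simp
  moreover have "mat_delete C m j0 =
      mat m m (\<lambda>(i,j). a i (insert_index j0 j) - a m (insert_index j0 j) / a m j0 * a i j0)"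
    by (rule eq_matI) (auto simp: mat_delete_def C_def insert_index_def \<alpha>_def)
  ultimately show ?thesis by (simp add: A_def cofactor_def \<alpha>_def)
qed

lemma nn_integral_lborel_affine:
  fixes h :: "'a::euclidean_space \<Rightarrow> ennreal"
  assumes c: "c \<noteq> 0" and [measurable]: "h \<in> borel_measurable borel"
  shows "(\<integral>\<^sup>+y. h y \<partial>lborel) = ennreal (\<bar>c\<bar>^DIM('a)) * (\<integral>\<^sup>+t. h (t0 + c *\<^sub>R t) \<partial>lborel)"
  by (subst lborel_affine[OF c, of t0])
     (simp add: nn_integral_density nn_integral_distr nn_integral_cmult)

lemma nn_integral_lborel_translate:
  fixes h :: "'a::euclidean_space \<Rightarrow> ennreal"
  assumes "h \<in> borel_measurable borel"
  shows "(\<integral>\<^sup>+t. h (t + t0) \<partial>lborel) = (\<integral>\<^sup>+y. h y \<partial>lborel)"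
  using nn_integral_lborel_affine[OF _ assms, of 1 t0] by (simp add: add.commute)

interpretation lborel_PiM: product_sigma_finite "\<lambda>_::nat. (lborel :: 'a::euclidean_space measure)"
  by (simp add: product_sigma_finite_def sigma_finite_lborel)

lemma bij_betw_insert_index:
  "j0 < Suc m \<Longrightarrow> bij_betw (insert_index j0) {..<m} ({..<Suc m} - {j0})"
  using bij_betw_imageI[OF insert_index_inj_on insert_index_image]
  by (simp add: atLeast0LessThan)

text \<open>Substitute \<open>t = u j0 + \<beta> j0 *\<^sub>R y\<close>.\<close>
lemma nn_integral_lborel_prod_affine_forms:
  fixes g :: "nat \<Rightarrow> 'a::euclidean_space \<Rightarrow> ennreal" and u :: "nat \<Rightarrow> 'a" and \<beta> :: "nat \<Rightarrow> real"
  assumes j0: "j0 < Suc m" and pivot: "\<beta> j0 \<noteq> 0"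
    and [measurable]: "\<And>j. g j \<in> borel_measurable borel"
  defines "\<sigma> \<equiv> insert_index j0"
  shows "(\<integral>\<^sup>+y. (\<Prod>j<Suc m. g j (u j + \<beta> j *\<^sub>R y)) \<partial>lborel) =
    ennreal (\<bar>1 / \<beta> j0\<bar>^DIM('a)) * (\<integral>\<^sup>+t. g j0 t *
      (\<Prod>j<m. g (\<sigma> j) (u (\<sigma> j) - (\<beta> (\<sigma> j) / \<beta> j0) *\<^sub>R u j0 + (\<beta> (\<sigma> j) / \<beta> j0) *\<^sub>R t)) \<partial>lborel)"
proof -
  have "(\<integral>\<^sup>+y. (\<Prod>j<Suc m. g j (u j + \<beta> j *\<^sub>R y)) \<partial>lborel) =
      ennreal (\<bar>1 / \<beta> j0\<bar>^DIM('a)) * (\<integral>\<^sup>+t. (\<Prod>j<Suc m. g j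
        (u j + \<beta> j *\<^sub>R (- (1 / \<beta> j0) *\<^sub>R u j0 + (1 / \<beta> j0) *\<^sub>R t))) \<partial>lborel)"
    using pivot by (intro nn_integral_lborel_affine) auto
  also have "(\<lambda>t. \<Prod>j<Suc m. g j (u j + \<beta> j *\<^sub>R (- (1 / \<beta> j0) *\<^sub>R u j0 + (1 / \<beta> j0) *\<^sub>R t))) =
      (\<lambda>t. g j0 t * (\<Prod>j<m. g (\<sigma> j)
        (u (\<sigma> j) - (\<beta> (\<sigma> j) / \<beta> j0) *\<^sub>R u j0 + (\<beta> (\<sigma> j) / \<beta> j0) *\<^sub>R t)))"
  proof
    fix t
    define G where "G j = g j (u j + \<beta> j *\<^sub>R (- (1 / \<beta> j0) *\<^sub>R u j0 + (1 / \<beta> j0) *\<^sub>R t))" for j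
    have "(\<Prod>j<Suc m. G j) = G j0 * (\<Prod>j\<in>{..<Suc m} - {j0}. G j)"
      using j0 by (subst prod.remove[of _ j0]) auto
    also have "(\<Prod>j\<in>{..<Suc m} - {j0}. G j) = (\<Prod>j<m. G (\<sigma> j))"
      using prod.reindex_bij_betw[OF bij_betw_insert_index[OF j0], of G] by (simp add: \<sigma>_def)
    finally show "(\<Prod>j<Suc m. G j) = g j0 t * (\<Prod>j<m. g (\<sigma> j)
        (u (\<sigma> j) - (\<beta> (\<sigma> j) / \<beta> j0) *\<^sub>R u j0 + (\<beta> (\<sigma> j) / \<beta> j0) *\<^sub>R t))"
      using pivot by (simp add: G_def scaleR_add_right algebra_simps)
  qed
  finally show ?thesis .
qed

text \<open>Linear change of variables on \<open>(\<real>\<^sup>N)\<^sup>m\<close>: induct on \<open>m\<close>, integrating out the last variable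
  against a pivot of the last row; what remains is the same integral for the Schur complement,
  with translated integrands.\<close>
lemma nn_integral_PiM_prod_linear_forms:
  fixes a :: "nat \<Rightarrow> nat \<Rightarrow> real" and g :: "nat \<Rightarrow> 'a::euclidean_space \<Rightarrow> ennreal"
  assumes "det (mat m m (\<lambda>(i,j). a i j)) \<noteq> 0" and "\<And>j. g j \<in> borel_measurable borel"
  shows "ennreal (\<bar>det (mat m m (\<lambda>(i,j). a i j))\<bar> ^ DIM('a)) *
     (\<integral>\<^sup>+x. (\<Prod>j<m. g j (\<Sum>i<m. a i j *\<^sub>R x i)) \<partial>PiM {..<m} (\<lambda>_. lborel))
   = (\<Prod>j<m. \<integral>\<^sup>+y. g j y \<partial>lborel)"
  using assms
proof (induction m arbitrary: a g)
  case 0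
  then show ?case by (simp add: PiM_empty)
next
  case (Suc m)
  note [measurable] = Suc.prems(2)
  let ?A = "mat (Suc m) (Suc m) (\<lambda>(i,j). a i j)"
  let ?P = "PiM {..<m} (\<lambda>_. lborel :: 'a measure)"
  let ?N = "DIM('a)"
  have "\<exists>j0<Suc m. a m j0 \<noteq> 0"
  proof (rule ccontr)
    assume zero_row: "\<not> ?thesis"
    then have "det ?A = (\<Sum>j<Suc m. ?A $$ (m,j) * cofactor ?A m j)"
      by (intro laplace_expansion_row) auto
    also have "\<dots> = 0" using zero_row by (intro sum.neutral) auto
    finally show False using Suc.prems(1) by simp
  qed
  then obtain j0 where j0: "j0 < Suc m" and pivot: "a m j0 \<noteq> 0" by blast
  define \<alpha> where "\<alpha> = a m j0"
  define \<sigma> where "\<sigma> = insert_index j0"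
  define b where "b i j = a i (\<sigma> j) - a m (\<sigma> j) / \<alpha> * a i j0" for i j
  define K where "K x t = (\<Prod>j<m. g (\<sigma> j) ((\<Sum>i<m. b i j *\<^sub>R x i) + (a m (\<sigma> j) / \<alpha>) *\<^sub>R t))"
    for x :: "nat \<Rightarrow> 'a" and t
  let ?B = "mat m m (\<lambda>(i,j). b i j)"
  have det_A: "det ?A = \<alpha> * (-1)^(m+j0) * det ?B"
    unfolding \<alpha>_def b_def \<sigma>_def by (rule det_pivot_last_row[of j0 m a, OF j0 pivot])
  then have det_B: "det ?B \<noteq> 0" using Suc.prems(1) by auto
  have [measurable]: "(\<lambda>(x,t). K x t) \<in> borel_measurable (?P \<Otimes>\<^sub>M lborel)"
    unfolding K_def by measurable
  have [measurable]: "(\<lambda>t. \<integral>\<^sup>+x. K x t \<partial>?P) \<in> borel_measurable borel"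
  proof -
    interpret sigma_finite_measure ?P by (rule lborel_PiM.sigma_finite) auto
    have "(\<lambda>(t,x). K x t) \<in> borel_measurable (lborel \<Otimes>\<^sub>M ?P)"
      unfolding K_def by measurable
    then show ?thesis using borel_measurable_nn_integral_fst[of "\<lambda>(t,x). K x t" lborel] by simp
  qed
  interpret pair_sigma_finite ?P "lborel :: 'a measure"
    by (intro pair_sigma_finite.intro lborel_PiM.sigma_finite sigma_finite_lborel) auto
  have last_var: "(\<integral>\<^sup>+y. (\<Prod>j<Suc m. g j (\<Sum>i<Suc m. a i j *\<^sub>R (x(m := y)) i)) \<partial>lborel)
      = ennreal (\<bar>1/\<alpha>\<bar>^?N) * (\<integral>\<^sup>+t. g j0 t * K x t \<partial>lborel)" for x
  proof -
    define u where "u j = (\<Sum>i<m. a i j *\<^sub>R x i)" for j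
    have forms: "u (\<sigma> j) - (a m (\<sigma> j) / \<alpha>) *\<^sub>R u j0 = (\<Sum>i<m. b i j *\<^sub>R x i)" for j
      by (simp add: u_def b_def scaleR_sum_right sum_subtractf[symmetric] algebra_simps)
    have "(\<integral>\<^sup>+y. (\<Prod>j<Suc m. g j (\<Sum>i<Suc m. a i j *\<^sub>R (x(m := y)) i)) \<partial>lborel)
       = (\<integral>\<^sup>+y. (\<Prod>j<Suc m. g j (u j + a m j *\<^sub>R y)) \<partial>lborel)"
      by (intro nn_integral_cong prod.cong refl arg_cong[where f="g _"]) (simp add: u_def)
    also have "\<dots> = ennreal (\<bar>1/\<alpha>\<bar>^?N) * (\<integral>\<^sup>+t. g j0 t * (\<Prod>j<m. g (\<sigma> j)
        (u (\<sigma> j) - (a m (\<sigma> j) / \<alpha>) *\<^sub>R u j0 + (a m (\<sigma> j) / \<alpha>) *\<^sub>R t)) \<partial>lborel)"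
      unfolding \<alpha>_def \<sigma>_def by (rule nn_integral_lborel_prod_affine_forms[where \<beta>="a m", OF j0 pivot]) measurable
    finally show ?thesis by (simp add: K_def forms)
  qed
  have IH: "ennreal (\<bar>det ?B\<bar> ^ ?N) * (\<integral>\<^sup>+x. K x t \<partial>?P) = (\<Prod>j<m. \<integral>\<^sup>+y. g (\<sigma> j) y \<partial>lborel)" for t
  proof -
    have "ennreal (\<bar>det ?B\<bar> ^ ?N) * (\<integral>\<^sup>+x. K x t \<partial>?P)
       = (\<Prod>j<m. \<integral>\<^sup>+y. g (\<sigma> j) (y + (a m (\<sigma> j) / \<alpha>) *\<^sub>R t) \<partial>lborel)"
      unfolding K_def by (rule Suc.IH[OF det_B]) measurable
    also have "\<dots> = (\<Prod>j<m. \<integral>\<^sup>+y. g (\<sigma> j) y \<partial>lborel)"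
      by (intro prod.cong refl nn_integral_lborel_translate) measurable
    finally show ?thesis .
  qed
  have abs_det_A: "ennreal (\<bar>det ?A\<bar> ^ ?N) = ennreal (\<bar>\<alpha>\<bar> ^ ?N) * ennreal (\<bar>det ?B\<bar> ^ ?N)"
    by (simp add: det_A abs_mult power_mult_distrib ennreal_mult)
  have pivot_cancel: "ennreal (\<bar>\<alpha>\<bar> ^ ?N) * (ennreal (\<bar>1/\<alpha>\<bar> ^ ?N) * z) = z" for z
    using pivot by (simp add: \<alpha>_def mult.assoc[symmetric] ennreal_mult'[symmetric]
        power_mult_distrib[symmetric] abs_mult[symmetric])
  have "ennreal (\<bar>det ?A\<bar> ^ ?N) * (\<integral>\<^sup>+x. (\<Prod>j<Suc m. g j (\<Sum>i<Suc m. a i j *\<^sub>R x i)) \<partial>PiM {..<Suc m} (\<lambda>_. lborel))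
     = ennreal (\<bar>det ?A\<bar> ^ ?N) *
       (\<integral>\<^sup>+x. (\<integral>\<^sup>+y. (\<Prod>j<Suc m. g j (\<Sum>i<Suc m. a i j *\<^sub>R (x(m := y)) i)) \<partial>lborel) \<partial>?P)"
    unfolding lessThan_Suc[of m]
    by (subst lborel_PiM.product_nn_integral_insert) (auto, measurable)
  also have "\<dots> = ennreal (\<bar>\<alpha>\<bar> ^ ?N) * ennreal (\<bar>det ?B\<bar> ^ ?N) *
       (\<integral>\<^sup>+x. ennreal (\<bar>1/\<alpha>\<bar>^?N) * (\<integral>\<^sup>+t. g j0 t * K x t \<partial>lborel) \<partial>?P)"
    by (simp only: last_var abs_det_A)
  also have "\<dots> = ennreal (\<bar>det ?B\<bar> ^ ?N) * (\<integral>\<^sup>+x. (\<integral>\<^sup>+t. g j0 t * K x t \<partial>lborel) \<partial>?P)"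
    by (subst nn_integral_cmult) (measurable, simp only: mult.assoc mult.left_commute[of "ennreal (\<bar>det ?B\<bar> ^ ?N)"] pivot_cancel)
  also have "(\<integral>\<^sup>+x. (\<integral>\<^sup>+t. g j0 t * K x t \<partial>lborel) \<partial>?P) =
      (\<integral>\<^sup>+t. (\<integral>\<^sup>+x. g j0 t * K x t \<partial>?P) \<partial>lborel)"
    by (rule Fubini'[symmetric]) measurable
  also have "\<dots> = (\<integral>\<^sup>+t. g j0 t * (\<integral>\<^sup>+x. K x t \<partial>?P) \<partial>lborel)"
    by (intro nn_integral_cong nn_integral_cmult) measurable
  also have "ennreal (\<bar>det ?B\<bar> ^ ?N) * \<dots> =
      (\<integral>\<^sup>+t. g j0 t * (ennreal (\<bar>det ?B\<bar> ^ ?N) * (\<integral>\<^sup>+x. K x t \<partial>?P)) \<partial>lborel)"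
    by (subst nn_integral_cmult[symmetric]) (measurable, simp only: mult.left_commute)
  also have "\<dots> = (\<integral>\<^sup>+t. g j0 t * (\<Prod>j<m. \<integral>\<^sup>+y. g (\<sigma> j) y \<partial>lborel) \<partial>lborel)"
    by (simp only: IH)
  also have "\<dots> = (\<integral>\<^sup>+t. g j0 t \<partial>lborel) * (\<Prod>j<m. \<integral>\<^sup>+y. g (\<sigma> j) y \<partial>lborel)"
    by (subst nn_integral_multc) auto
  also have "\<dots> = (\<Prod>j<Suc m. \<integral>\<^sup>+y. g j y \<partial>lborel)"
    using j0 prod.reindex_bij_betw[OF bij_betw_insert_index[OF j0], of "\<lambda>j. \<integral>\<^sup>+y. g j y \<partial>lborel"]
    by (subst prod.remove[of _ j0]) (auto simp: \<sigma>_def)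
  finally show ?case .
qed

lemma nn_integral_powr_tail:
  fixes a p :: real
  assumes a: "a > 0" and p: "p > 0"
  shows "(\<integral>\<^sup>+r. ennreal (p * r powr (-p-1)) * indicator {a..} r \<partial>lborel) = ennreal (a powr (-p))"
proof -
  have "(\<integral>\<^sup>+r. ennreal (p * r powr (-p-1)) * indicator {a..} r \<partial>lborel) = 0 - (- (a powr (-p)))"
  proof (rule nn_integral_FTC_atLeast)
    show "DERIV (\<lambda>r. - (r powr (-p))) x :> p * x powr (-p-1)" if "a \<le> x" for x
      using DERIV_minus[OF has_real_derivative_powr[of x "-p"]] a that by simp
    show "((\<lambda>r. - (r powr (-p))) \<longlongrightarrow> 0) at_top"
      using tendsto_minus[OF tendsto_neg_powr[of "-p" "\<lambda>x. x" at_top]] p by (simp add: filterlim_ident)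
  qed (use p in auto)
  then show ?thesis by simp
qed

lemma emeasure_lborel_annulus:
  fixes R r :: real
  assumes R: "0 < R" and Rr: "R \<le> r"
  shows "emeasure lborel {x::'a::euclidean_space. R < norm x \<and> norm x \<le> r} =
    ennreal (unit_ball_vol DIM('a) * r ^ DIM('a) - unit_ball_vol DIM('a) * R ^ DIM('a))"
proof -
  have "{x::'a. R < norm x \<and> norm x \<le> r} = cball 0 r - cball 0 R" by auto
  also have "emeasure lborel (cball (0::'a) r - cball 0 R) =
      emeasure lborel (cball (0::'a) r) - emeasure lborel (cball (0::'a) R)"
    using Rr R by (intro emeasure_Diff) (auto simp: emeasure_cball)
  also have "\<dots> = ennreal (unit_ball_vol DIM('a) * r ^ DIM('a) - unit_ball_vol DIM('a) * R ^ DIM('a))"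
    using Rr R by (simp add: emeasure_cball ennreal_minus)
  finally show ?thesis .
qed

lemma nn_integral_powr_annulus_volume:
  fixes V R p :: real and d :: nat
  assumes V: "0 \<le> V" and R: "0 < R" and p: "real d < p"
  shows "(\<integral>\<^sup>+r. ennreal (p * r powr (-p-1) * (V * r ^ d - V * R ^ d)) * indicator {R..} r \<partial>lborel)
    = ennreal (V * R powr (real d - p) * real d / (p - real d))"
proof -
  define F where "F r = V * p / (d - p) * r powr (d - p) + V * R ^ d * r powr (-p)" for r
  have p0: "p > 0" using p by (metis of_nat_0_le_iff le_less_trans)
  have "(\<integral>\<^sup>+r. ennreal (p * r powr (-p-1) * (V * r ^ d - V * R ^ d)) * indicator {R..} r \<partial>lborel)
      = ennreal (0 - F R)"
  proof (rule nn_integral_FTC_atLeast)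
    show "DERIV F x :> p * x powr (-p-1) * (V * x ^ d - V * R ^ d)" if "R \<le> x" for x
    proof -
      have x: "x > 0" using R that by simp
      have "DERIV F x :> V * p / (d - p) * ((d - p) * x powr (d - p - 1)) + V * R ^ d * (- p * x powr (- p - 1))"
        unfolding F_def by (intro DERIV_add DERIV_cmult has_real_derivative_powr x)
      moreover have "V * p / (d - p) * ((d - p) * x powr (d - p - 1)) + V * R ^ d * (- p * x powr (- p - 1))
          = p * x powr (-p-1) * (V * x ^ d - V * R ^ d)"
        using p x by (simp add: powr_realpow[symmetric] field_simps powr_add[symmetric])
      ultimately show ?thesis by simp
    qed
    show "0 \<le> p * x powr (-p-1) * (V * x ^ d - V * R ^ d)" if "R \<le> x" for x
      using that R V p0 power_mono[of R x d] by (intro mult_nonneg_nonneg) (auto intro: mult_left_mono)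
    have "((\<lambda>r::real. r powr (d - p)) \<longlongrightarrow> 0) at_top" "((\<lambda>r::real. r powr (-p)) \<longlongrightarrow> 0) at_top"
      using p p0 by (auto intro!: tendsto_neg_powr filterlim_ident)
    from tendsto_add[OF tendsto_mult[OF tendsto_const this(1)] tendsto_mult[OF tendsto_const this(2)]]
    show "(F \<longlongrightarrow> 0) at_top"
      unfolding F_def by (simp only: mult_zero_right add_0)
  qed measurable
  also have "0 - F R = V * R powr (real d - p) * real d / (p - real d)"
    using p R by (simp add: F_def powr_realpow[symmetric] powr_add[symmetric] field_simps)
  finally show ?thesis .
qed

text \<open>Layer cake: \<open>|x|\<^sup>-\<^sup>p\<close> is the integral of \<open>p r\<^sup>-\<^sup>p\<^sup>-\<^sup>1\<close> over \<open>r \<ge> |x|\<close>, and Tonelli turns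
  the integral over \<open>x\<close> into one over annulus volumes.\<close>
lemma nn_integral_norm_powr_outside_ball:
  fixes R p :: real
  assumes R: "R > 0" and p: "p > real DIM('a)"
  shows "(\<integral>\<^sup>+x. ennreal (if norm x > R then norm x powr (-p) else 0) \<partial>(lborel::'a::euclidean_space measure))
    = ennreal (unit_ball_vol DIM('a) * R powr (real DIM('a) - p) * real DIM('a) / (p - real DIM('a)))"
proof -
  let ?d = "DIM('a)" and ?V = "unit_ball_vol DIM('a)"
  have p0: "p > 0" using p by (metis of_nat_0_le_iff le_less_trans)
  define h where "h x r = (if norm x \<le> r \<and> R < norm x then ennreal (p * r powr (-p-1)) else 0)"
    for x :: 'a and r :: real
  have [measurable]: "(\<lambda>(x,r). h x r) \<in> borel_measurable (lborel \<Otimes>\<^sub>M lborel)"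
    unfolding h_def by measurable
  have layer: "ennreal (if norm x > R then norm x powr (-p) else 0) = (\<integral>\<^sup>+r. h x r \<partial>lborel)" for x
  proof (cases "norm x > R")
    case True
    then have "(\<integral>\<^sup>+r. h x r \<partial>lborel) = (\<integral>\<^sup>+r. ennreal (p * r powr (-p-1)) * indicator {norm x..} r \<partial>lborel)"
      by (intro nn_integral_cong) (auto simp: h_def indicator_def)
    also have "\<dots> = ennreal (norm x powr (-p))"
      using True R p0 by (intro nn_integral_powr_tail) auto
    finally show ?thesis using True by simp
  qed (auto simp: h_def)
  have annulus: "(\<integral>\<^sup>+x. h x r \<partial>lborel) =
      ennreal (p * r powr (-p-1) * (?V * r ^ ?d - ?V * R ^ ?d)) * indicator {R..} r" for r
  proof -
    define S where "S = {x::'a. R < norm x \<and> norm x \<le> r}"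
    have "(\<integral>\<^sup>+x. h x r \<partial>lborel) = (\<integral>\<^sup>+x. ennreal (p * r powr (-p-1)) * indicator S x \<partial>lborel)"
      by (intro nn_integral_cong) (auto simp: h_def S_def indicator_def)
    also have "\<dots> = ennreal (p * r powr (-p-1)) * emeasure lborel S"
      by (rule nn_integral_cmult_indicator) (simp add: S_def)
    also have "\<dots> = ennreal (p * r powr (-p-1) * (?V * r ^ ?d - ?V * R ^ ?d)) * indicator {R..} r"
    proof (cases "R \<le> r")
      case True
      moreover have "?V * R ^ ?d \<le> ?V * r ^ ?d"
        using True R by (intro mult_left_mono power_mono) auto
      ultimately show ?thesis
        using p0 R by (simp add: S_def emeasure_lborel_annulus ennreal_mult')
    next
      case False
      then have "S = {}" by (auto simp: S_def)
      then show ?thesis using False by simp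
    qed
    finally show ?thesis .
  qed
  have "(\<integral>\<^sup>+x. ennreal (if norm x > R then norm x powr (-p) else 0) \<partial>(lborel::'a measure))
      = (\<integral>\<^sup>+x. (\<integral>\<^sup>+r. h x r \<partial>lborel) \<partial>lborel)"
    by (simp only: layer)
  also have "\<dots> = (\<integral>\<^sup>+r. (\<integral>\<^sup>+x. h x r \<partial>lborel) \<partial>lborel)"
    by (rule pair_sigma_finite.Fubini'[symmetric])
       (auto intro: pair_sigma_finite.intro sigma_finite_lborel)
  also have "\<dots> = ennreal (?V * R powr (real ?d - p) * real ?d / (p - real ?d))"
    using R p by (simp only: annulus nn_integral_powr_annulus_volume unit_ball_vol_nonneg)
  finally show ?thesis .
qed

lemma Vn_pos: "0 < Vn n"
  by (simp add: Vn_def)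

lemma Rn_powr:
  assumes "0 < n" and "0 < \<delta>"
  shows "Rn n \<delta> powr (s * real n) = (\<delta> / Vn n) powr s"
  using assms by (simp add: Rn_def powr_powr)

lemma fcd_nonneg: "0 \<le> fcd c \<delta> x"
  by (simp add: fcd_def)

lemma borel_measurable_fcd[measurable]: "fcd c \<delta> \<in> borel_measurable borel"
  unfolding fcd_def[abs_def] by measurable

lemma fcd_le:
  fixes x :: "real ^ 'n"
  assumes \<delta>: "0 < \<delta>" and c: "0 < c"
  shows "fcd c \<delta> x \<le> Vn CARD('n) powr (2 * c) * \<delta> powr (- 2 * c)"
proof -
  let ?N = "CARD('n)" and ?R = "Rn CARD('n) \<delta>"
  have "fcd c \<delta> x \<le> ?R powr (- 2 * c * ?N)"
    unfolding fcd_def using \<delta> c Vn_pos[of ?N]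
    by (auto intro!: powr_mono2' simp: Rn_def less_imp_le)
  also have "\<dots> = (\<delta> / Vn ?N) powr (- 2 * c)"
    using \<delta> Rn_powr[of ?N \<delta> "- 2 * c"] by simp
  also have "\<dots> = Vn ?N powr (2 * c) * \<delta> powr (- 2 * c)"
    using \<delta> Vn_pos[of ?N] by (simp add: powr_divide powr_minus field_simps)
  finally show ?thesis .
qed

lemma nn_integral_fcd:
  assumes \<delta>: "0 < \<delta>" and c: "1/2 < c"
  shows "(\<integral>\<^sup>+x. ennreal (fcd c \<delta> (x :: real ^ 'n)) \<partial>lborel) =
    ennreal (Vn CARD('n) powr (2 * c) * \<delta> powr (1 - 2 * c) / (2 * c - 1))"
proof -
  let ?N = "CARD('n)" and ?V = "Vn CARD('n)" and ?R = "Rn CARD('n) \<delta>"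
  have R: "0 < ?R" using \<delta> Vn_pos[of ?N] by (simp add: Rn_def)
  have "fcd c \<delta> x = (if ?R < norm x then norm x powr (- (2 * c * ?N)) else 0)" for x :: "real ^ 'n"
    by (simp add: fcd_def algebra_simps)
  then have "(\<integral>\<^sup>+x. ennreal (fcd c \<delta> (x :: real ^ 'n)) \<partial>lborel) =
      ennreal (?V * ?R powr (real ?N - 2 * c * ?N) * real ?N / (2 * c * ?N - real ?N))"
    using nn_integral_norm_powr_outside_ball[OF R, where 'a="real ^ 'n", of "2 * c * ?N"] c
    by (simp add: Vn_def unit_ball_vol_def)
  also have "?R powr (real ?N - 2 * c * ?N) = (\<delta> / ?V) powr (1 - 2 * c)"
    using \<delta> Rn_powr[of ?N \<delta> "1 - 2 * c"] by (simp add: algebra_simps)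
  also have "?V * (\<delta> / ?V) powr (1 - 2 * c) * real ?N / (2 * c * ?N - real ?N) =
      ?V powr (2 * c) * \<delta> powr (1 - 2 * c) / (2 * c - 1)"
    using \<delta> c Vn_pos[of ?N]
    by (simp add: powr_divide powr_diff field_simps)
  finally show ?thesis .
qed

lemma mdet_cong:
  assumes "\<And>i j. i < m \<Longrightarrow> j < m \<Longrightarrow> A i j = B i j"
  shows "mdet m A = mdet m B"
proof -
  have "(\<Prod>i<m. A i (p i)) = (\<Prod>i<m. B i (p i))" if "p permutes {..<m}" for p
    using assms permutes_in_image[OF that] by (intro prod.cong) auto
  then show ?thesis unfolding mdet_def by (intro sum.cong) auto
qed

lemma mdet_eq_det: "mdet m A = det (mat m m (\<lambda>(i,j). A i j))"
  unfolding mdet_def det_def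
  by (auto simp: atLeast0LessThan intro!: sum.cong prod.cong dest: permutes_in_image)

lemma det_of_int_divide:
  "det (mat m m (\<lambda>(i,j). real_of_int (A i j) / x)) = real_of_int (mdet m A) / x ^ m"
proof -
  have "mat m m (\<lambda>(i,j). real_of_int (A i j) / x) = (1 / x) \<cdot>\<^sub>m map_mat real_of_int (mat m m (\<lambda>(i,j). A i j))"
    by (rule eq_matI) auto
  then show ?thesis by (simp add: of_int_hom.hom_det mdet_eq_det power_divide)
qed

lemma finite_minor_dets:
  fixes D :: "nat \<Rightarrow> nat \<Rightarrow> int"
  shows "finite {\<bar>mdet m (\<lambda>i j. D i (s j))\<bar> | s. strict_mono_on {..<m} s \<and> s ` {..<m} \<subseteq> {..<k}}"
proof (rule finite_subset)
  show "{\<bar>mdet m (\<lambda>i j. D i (s j))\<bar> | s. strict_mono_on {..<m} s \<and> s ` {..<m} \<subseteq> {..<k}}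
      \<subseteq> (\<lambda>s. \<bar>mdet m (\<lambda>i j. D i (s j))\<bar>) ` ({..<m} \<rightarrow>\<^sub>E {..<k})"
  proof
    fix v assume "v \<in> {\<bar>mdet m (\<lambda>i j. D i (s j))\<bar> | s. strict_mono_on {..<m} s \<and> s ` {..<m} \<subseteq> {..<k}}"
    then obtain s where s: "s ` {..<m} \<subseteq> {..<k}" and v: "v = \<bar>mdet m (\<lambda>i j. D i (s j))\<bar>"
      by blast
    have "v = \<bar>mdet m (\<lambda>i j. D i (restrict s {..<m} j))\<bar>"
      unfolding v by (subst mdet_cong[of m _ "\<lambda>i j. D i (s j)"]) auto
    moreover have "restrict s {..<m} \<in> {..<m} \<rightarrow>\<^sub>E {..<k}" using s by auto
    ultimately show "v \<in> (\<lambda>s. \<bar>mdet m (\<lambda>i j. D i (s j))\<bar>) ` ({..<m} \<rightarrow>\<^sub>E {..<k})"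
      by blast
  qed
qed (simp add: finite_PiE)

lemma admissible_mdet_pivot_columns:
  assumes "admissible k m \<nu> \<mu> q D"
  shows "mdet m (\<lambda>i j. D i (\<nu> j)) = q ^ m"
proof -
  have "\<forall>i<m. \<forall>j<m. D i (\<nu> j) = (if i = j then q else 0)"
    using assms unfolding admissible_def by blast
  then have "mdet m (\<lambda>i j. D i (\<nu> j)) = mdet m (\<lambda>i j. if i = j then q else 0)"
    by (intro mdet_cong) simp
  also have "\<dots> = det (q \<cdot>\<^sub>m 1\<^sub>m m)"
    unfolding mdet_eq_det by (intro arg_cong[where f=det] eq_matI) auto
  finally show ?thesis by simp
qed

text \<open>The pivot columns \<open>\<nu>\<close> give a minor of determinant \<open>q\<^sup>m\<close>, so \<open>M(D) \<ge> 1\<close>.\<close>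
lemma admissible_MD_attained:
  assumes adm: "admissible k m \<nu> \<mu> q D"
  obtains s where "strict_mono_on {..<m} s" and "s ` {..<m} \<subseteq> {..<k}"
    and "MD k m q D = \<bar>real_of_int (mdet m (\<lambda>i j. D i (s j)))\<bar> / real_of_int q ^ m"
    and "0 < MD k m q D"
proof -
  define S where "S = {\<bar>mdet m (\<lambda>i j. D i (s j))\<bar> | s. strict_mono_on {..<m} s \<and> s ` {..<m} \<subseteq> {..<k}}"
  have q: "0 < q" using adm unfolding admissible_def by blast
  have "strict_mono_on {..<m} \<nu>" "\<nu> ` {..<m} \<subseteq> {..<k}"
    using adm unfolding admissible_def is_division_def by blast+
  moreover have "\<bar>mdet m (\<lambda>i j. D i (\<nu> j))\<bar> = q ^ m"
    using q by (simp add: admissible_mdet_pivot_columns[OF adm])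
  ultimately have "q ^ m \<in> S" unfolding S_def by (intro CollectI exI[of _ \<nu>]) simp
  moreover have "finite S" unfolding S_def by (rule finite_minor_dets)
  ultimately have Max: "Max S \<in> S" "q ^ m \<le> Max S" by (auto intro: Max_in Max_ge)
  from Max(1) obtain s where s: "strict_mono_on {..<m} s" "s ` {..<m} \<subseteq> {..<k}"
    and s_Max: "Max S = \<bar>mdet m (\<lambda>i j. D i (s j))\<bar>"
    unfolding S_def by blast
  have MD: "MD k m q D = real_of_int (Max S) / real_of_int q ^ m"
    unfolding MD_def S_def[symmetric] by (simp add: power_int_minus divide_inverse mult.commute)
  show ?thesis
  proof (rule that[OF s])
    show "MD k m q D = \<bar>real_of_int (mdet m (\<lambda>i j. D i (s j)))\<bar> / real_of_int q ^ m"
      unfolding MD s_Max by simp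
    have "0 < Max S" using Max(2) q by (meson less_le_trans zero_less_power)
    then show "0 < MD k m q D" unfolding MD using q by simp
  qed
qed

lemma prod_le_power_mult_prod_image:
  fixes f :: "nat \<Rightarrow> real"
  assumes inj: "inj_on s {..<m}" and s: "s ` {..<m} \<subseteq> {..<k}"
    and f: "\<And>j. 0 \<le> f j" "\<And>j. f j \<le> C"
  shows "(\<Prod>j<k. f j) \<le> C ^ (k - m) * (\<Prod>j<m. f (s j))"
proof -
  have "(\<Prod>j<k. f j) = (\<Prod>j\<in>{..<k} - s ` {..<m}. f j) * (\<Prod>j<m. f (s j))"
    using s inj by (simp add: prod.subset_diff[of "s ` {..<m}" "{..<k}"] prod.reindex)
  also have "(\<Prod>j\<in>{..<k} - s ` {..<m}. f j) \<le> C ^ (k - m)"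
    using prod_mono[of "{..<k} - s ` {..<m}" f "\<lambda>_. C"] f s inj
    by (simp add: card_Diff_subset card_image)
  finally show ?thesis
    using f by (simp add: mult_right_mono prod_nonneg)
qed

lemma ennreal_eq_divide_of_mult_eq:
  assumes a: "0 < a" and b: "0 \<le> b" and eq: "ennreal a * x = ennreal b"
  shows "x = ennreal (b / a)"
proof -
  have "x = ennreal (1 / a) * (ennreal a * x)"
    using a by (simp add: mult.assoc[symmetric] ennreal_mult[symmetric])
  also have "\<dots> = ennreal (b / a)"
    using a b by (simp add: eq ennreal_mult[symmetric])
  finally show ?thesis .
qed

lemma nn_integral_PiM_prod_fcd_linear_forms:
  fixes a :: "nat \<Rightarrow> nat \<Rightarrow> real"
  assumes \<delta>: "0 < \<delta>" and c: "1/2 < c" and M: "0 < M"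
    and det: "\<bar>det (mat m m (\<lambda>(i,j). a i j))\<bar> = M"
  shows "(\<integral>\<^sup>+x. (\<Prod>j<m. ennreal (fcd c \<delta> (\<Sum>i<m. a i j *\<^sub>R (x i :: real ^ 'n))))
      \<partial>PiM {..<m} (\<lambda>_. lborel))
    = ennreal ((Vn CARD('n) powr (2 * c) * \<delta> powr (1 - 2 * c) / (2 * c - 1)) ^ m / M ^ CARD('n))"
proof (rule ennreal_eq_divide_of_mult_eq)
  have "det (mat m m (\<lambda>(i,j). a i j)) \<noteq> 0" using det M by auto
  then show "ennreal (M ^ CARD('n)) * (\<integral>\<^sup>+x. (\<Prod>j<m. ennreal (fcd c \<delta> (\<Sum>i<m. a i j *\<^sub>R (x i :: real ^ 'n))))
      \<partial>PiM {..<m} (\<lambda>_. lborel))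
    = ennreal ((Vn CARD('n) powr (2 * c) * \<delta> powr (1 - 2 * c) / (2 * c - 1)) ^ m)"
    using nn_integral_PiM_prod_linear_forms[of m a "\<lambda>_ y. ennreal (fcd c \<delta> (y :: real ^ 'n))"]
      det nn_integral_fcd[OF \<delta> c, where 'n='n] c by (simp add: ennreal_power)
qed (use M c in auto)

lemma bound_constants_eq:
  fixes V \<delta> M c :: real
  assumes V: "0 < V" and \<delta>: "0 < \<delta>" and M: "0 < M" and "m \<le> k"
  shows "V powr (- 2 * real k * c) * (V powr (2 * c) * \<delta> powr (- 2 * c)) ^ (k - m) *
      ((V powr (2 * c) * \<delta> powr (1 - 2 * c) / (2 * c - 1)) ^ m / M ^ N)
    = M powr (- real N) * \<delta> powr (real m - 2 * real k * c) / (2 * c - 1) ^ m"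
proof -
  have "(V powr (2 * c) * \<delta> powr (- 2 * c)) ^ (k - m) * (V powr (2 * c) * \<delta> powr (1 - 2 * c)) ^ m =
      (V powr (2 * c)) ^ (k - m + m) * ((\<delta> powr (- 2 * c)) ^ (k - m) * (\<delta> powr (1 - 2 * c)) ^ m)"
    by (simp only: power_mult_distrib power_add ac_simps)
  also have "\<dots> = V powr (2 * real k * c) * \<delta> powr (real m - 2 * real k * c)"
    using V \<delta> \<open>m \<le> k\<close> by (simp add: powr_power powr_add[symmetric] of_nat_diff algebra_simps)
  finally have powers: "(V powr (2 * c) * \<delta> powr (- 2 * c)) ^ (k - m) *
      (V powr (2 * c) * \<delta> powr (1 - 2 * c)) ^ m =
      V powr (2 * real k * c) * \<delta> powr (real m - 2 * real k * c)" .
  have "V powr (- 2 * real k * c) * (V powr (2 * c) * \<delta> powr (- 2 * c)) ^ (k - m) *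
      ((V powr (2 * c) * \<delta> powr (1 - 2 * c) / (2 * c - 1)) ^ m / M ^ N) =
      V powr (- 2 * real k * c) * ((V powr (2 * c) * \<delta> powr (- 2 * c)) ^ (k - m) *
      (V powr (2 * c) * \<delta> powr (1 - 2 * c)) ^ m) * (1 / M ^ N) / (2 * c - 1) ^ m"
    by (simp add: power_divide ac_simps)
  also have "\<dots> = (V powr (- 2 * real k * c) * V powr (2 * real k * c)) *
      \<delta> powr (real m - 2 * real k * c) * M powr (- real N) / (2 * c - 1) ^ m"
    using M by (simp only: powers) (simp add: powr_minus powr_realpow divide_inverse mult.assoc)
  also have "V powr (- 2 * real k * c) * V powr (2 * real k * c) = 1"
    using V by (simp add: powr_add[symmetric])
  finally show ?thesis by simp
qed

lemma Iint_le_integral_over_minor: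
  fixes s :: "nat \<Rightarrow> nat"
  assumes s: "inj_on s {..<m}" "s ` {..<m} \<subseteq> {..<k}" and \<delta>: "0 < \<delta>" and c: "0 < c"
  shows "Iint k m q D c \<delta> TYPE('n::finite) \<le>
    ennreal (Vn CARD('n) powr (- 2 * real k * c) * (Vn CARD('n) powr (2 * c) * \<delta> powr (- 2 * c)) ^ (k - m)) *
    (\<integral>\<^sup>+x. (\<Prod>j<m. ennreal (fcd c \<delta> (\<Sum>i<m. (real_of_int (D i (s j)) / real_of_int q) *\<^sub>R (x i :: real ^ 'n))))
      \<partial>PiM {..<m} (\<lambda>_. lborel))"
proof -
  let ?V = "Vn CARD('n)" and ?P = "PiM {..<m} (\<lambda>_. lborel :: (real ^ 'n) measure)"
  define C where "C = ?V powr (2 * c) * \<delta> powr (- 2 * c)"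
  have C: "0 \<le> C" by (simp add: C_def)
  have "ennreal (\<Prod>j<k. fcd c \<delta> (\<Sum>i<m. (real_of_int (D i j) / real_of_int q) *\<^sub>R x i))
      \<le> ennreal (C ^ (k - m)) *
        (\<Prod>j<m. ennreal (fcd c \<delta> (\<Sum>i<m. (real_of_int (D i (s j)) / real_of_int q) *\<^sub>R x i)))"
    for x :: "nat \<Rightarrow> real ^ 'n"
    using prod_le_power_mult_prod_image[OF s fcd_nonneg fcd_le[OF \<delta> c]] C
    by (simp add: C_def ennreal_mult[symmetric] prod_ennreal fcd_nonneg prod_nonneg ennreal_leI)
  then have "Iint k m q D c \<delta> TYPE('n) \<le> ennreal (?V powr (- 2 * real k * c)) *
      (\<integral>\<^sup>+x. ennreal (C ^ (k - m)) *
        (\<Prod>j<m. ennreal (fcd c \<delta> (\<Sum>i<m. (real_of_int (D i (s j)) / real_of_int q) *\<^sub>R x i))) \<partial>?P)"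
    unfolding Iint_def by (intro mult_left_mono nn_integral_mono) auto
  also have "\<dots> = ennreal (?V powr (- 2 * real k * c) * C ^ (k - m)) *
      (\<integral>\<^sup>+x. (\<Prod>j<m. ennreal (fcd c \<delta> (\<Sum>i<m. (real_of_int (D i (s j)) / real_of_int q) *\<^sub>R x i))) \<partial>?P)"
    using C by (simp add: nn_integral_cmult ennreal_mult mult.assoc)
  finally show ?thesis by (simp only: C_def)
qed

theorem lemma5p1:
  fixes k m :: nat and \<nu> \<mu> :: "nat \<Rightarrow> nat" and q :: int and D :: "nat \<Rightarrow> nat \<Rightarrow> int"
    and c \<delta> :: real
  assumes "k \<ge> 2" and "c > 1/2" and "\<delta> > 0"
    and "admissible k m \<nu> \<mu> q D"
  shows "Iint k m q D c \<delta> TYPE('n::finite)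
           \<le> ennreal (MD k m q D powr (- real CARD('n)) *
                      \<delta> powr (real m - 2 * real k * c) / (2 * c - 1) ^ m)"
proof -
  let ?V = "Vn CARD('n)" and ?M = "MD k m q D"
  have q: "0 < q" and "m \<le> k" using assms(4) unfolding admissible_def is_division_def by auto
  have c: "0 < c" using assms(2) by simp
  obtain s where s: "strict_mono_on {..<m} s" "s ` {..<m} \<subseteq> {..<k}"
    and M: "?M = \<bar>real_of_int (mdet m (\<lambda>i j. D i (s j)))\<bar> / real_of_int q ^ m" and M_pos: "0 < ?M"
    by (rule admissible_MD_attained[OF assms(4)])
  have det: "\<bar>det (mat m m (\<lambda>(i,j). real_of_int (D i (s j)) / real_of_int q))\<bar> = ?M"
    using q by (simp add: det_of_int_divide M abs_divide)
  have "Iint k m q D c \<delta> TYPE('n) \<le>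
      ennreal (?V powr (- 2 * real k * c) * (?V powr (2 * c) * \<delta> powr (- 2 * c)) ^ (k - m)) *
      ennreal ((?V powr (2 * c) * \<delta> powr (1 - 2 * c) / (2 * c - 1)) ^ m / ?M ^ CARD('n))"
    using Iint_le_integral_over_minor[OF strict_mono_on_imp_inj_on[OF s(1)] s(2) assms(3) c, of q D, where 'n='n]
    unfolding nn_integral_PiM_prod_fcd_linear_forms[OF assms(3,2) M_pos det, where 'n='n] .
  also have "\<dots> = ennreal (?V powr (- 2 * real k * c) * (?V powr (2 * c) * \<delta> powr (- 2 * c)) ^ (k - m) *
        ((?V powr (2 * c) * \<delta> powr (1 - 2 * c) / (2 * c - 1)) ^ m / ?M ^ CARD('n)))"
    using assms(2) M_pos by (intro ennreal_mult[symmetric]) auto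
  also have "\<dots> = ennreal (?M powr (- real CARD('n)) * \<delta> powr (real m - 2 * real k * c) / (2 * c - 1) ^ m)"
    using Vn_pos assms(3) M_pos \<open>m \<le> k\<close> by (simp only: bound_constants_eq)
  finally show ?thesis .
qed

end
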